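(* Suppose a group $G$ is weakly hyperbolic relative to $\{A,B,C_1,\ldots,C_m\}$, where $A$ and $B$ are conjugate subgroups of $G$. Then $G$ is weakly hyperbolic relative to $\{A,C_1,\ldots,C_m\}$.
   Context: For a group $G$ and a collection $\mathcal H=\{H_1,\ldots,H_k\}$ of subgroups, $X\subset G$ is a relative generating set if $G$ is generated by $X\cup H_1\cup\cdots\cup H_k$; the relative Cayley graph is the Cayley graph of $G$ with respect to $X\cup H_1\cup\cdots\cup H_k$ with combinatorial metric; $G$ is weakly hyperbolic relative to $\mathcal H$ if for some finite relative generating set $X$ this relative Cayley graph is hyperbolic. *)

theory Defs
  imports "HOL-Algebra.Algebra"
begin

definition sym_alph :: "('a, 'b) monoid_scheme \<Rightarrow> 'a set \<Rightarrow> 'a set" where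
  "sym_alph G S = S \<union> (\<lambda>s. inv\<^bsub>G\<^esub> s) ` S"

text \<open>Combinatorial (word) metric of the Cayley graph of G w.r.t. S:
  the length of a shortest edge path from g to h, i.e. the least n such that
  inv g \<otimes> h is a product of n letters from S \<union> S^-1.\<close>
definition word_dist :: "('a, 'b) monoid_scheme \<Rightarrow> 'a set \<Rightarrow> 'a \<Rightarrow> 'a \<Rightarrow> nat" where
  "word_dist G S g h =
     (LEAST n. \<exists>ws. length ws = n \<and> set ws \<subseteq> sym_alph G S \<and>
        foldr (\<lambda>x y. x \<otimes>\<^bsub>G\<^esub> y) ws \<one>\<^bsub>G\<^esub> = inv\<^bsub>G\<^esub> g \<otimes>\<^bsub>G\<^esub> h)"

definition gromov_product :: "('p \<Rightarrow> 'p \<Rightarrow> real) \<Rightarrow> 'p \<Rightarrow> 'p \<Rightarrow> 'p \<Rightarrow> real" where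
  "gromov_product d x y w = (d x w + d y w - d x y) / 2"

definition gromov_hyperbolic_on :: "'p set \<Rightarrow> ('p \<Rightarrow> 'p \<Rightarrow> real) \<Rightarrow> bool" where
  "gromov_hyperbolic_on V d \<longleftrightarrow> (\<exists>\<delta>\<ge>0. \<forall>x\<in>V. \<forall>y\<in>V. \<forall>z\<in>V. \<forall>w\<in>V.
      gromov_product d x z w \<ge> min (gromov_product d x y w) (gromov_product d y z w) - \<delta>)"

definition rel_gen_set :: "('a, 'b) monoid_scheme \<Rightarrow> 'a set \<Rightarrow> 'a set list \<Rightarrow> bool" where
  "rel_gen_set M Y Hs \<longleftrightarrow> Y \<subseteq> carrier M \<and>
     generate M (Y \<union> Union (set Hs)) = carrier M"

definition rel_cayley_hyperbolic :: "('a, 'b) monoid_scheme \<Rightarrow> 'a set \<Rightarrow> 'a set list \<Rightarrow> bool" where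
  "rel_cayley_hyperbolic G Y Hs \<longleftrightarrow>
     gromov_hyperbolic_on (carrier G)
       (\<lambda>g h. real (word_dist G (Y \<union> Union (set Hs)) g h))"

definition weakly_rel_hyperbolic :: "('a, 'b) monoid_scheme \<Rightarrow> 'a set list \<Rightarrow> bool" where
  "weakly_rel_hyperbolic G Hs \<longleftrightarrow>
     (\<exists>Y. finite Y \<and> rel_gen_set G Y Hs \<and> rel_cayley_hyperbolic G Y Hs)"

end

(*
  Since B = g A g^-1, replacing the peripheral subgroup B by the single extra generator g changes
  word lengths by at most a bounded factor: every element of B is a word g a g^-1 of length 3,
  and g itself has some fixed length in the old relative Cayley graph. So the identity map
  between the two relative Cayley graphs is bi-Lipschitz, and it remains to see that
  hyperbolicity of a graph survives a bi-Lipschitz change of its path metric. By the Morse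
  lemma, geodesics of one metric are quasi-geodesics of the other and therefore stay uniformly
  close to geodesics of the other; hence slim triangles transfer, and slim triangles give back
  the four-point condition.
*)

theory Submission
  imports Defs "HOL-Library.Log_Nat"
begin

section \<open>Geodesic metric spaces with integer distances\<close>

locale geodesic_nat_metric =
  fixes V :: "'a set" and d :: "'a \<Rightarrow> 'a \<Rightarrow> nat"
  assumes dist_self: "x \<in> V \<Longrightarrow> d x x = 0"
    and dist_eq_0D: "x \<in> V \<Longrightarrow> y \<in> V \<Longrightarrow> d x y = 0 \<Longrightarrow> x = y"
    and dist_commute: "x \<in> V \<Longrightarrow> y \<in> V \<Longrightarrow> d x y = d y x"
    and dist_triangle: "x \<in> V \<Longrightarrow> y \<in> V \<Longrightarrow> z \<in> V \<Longrightarrow> d x z \<le> d x y + d y z"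
    and dist_split: "x \<in> V \<Longrightarrow> y \<in> V \<Longrightarrow> k \<le> d x y \<Longrightarrow> \<exists>z\<in>V. d x z = k \<and> d z y = d x y - k"
begin

text \<open>Intervals stand in for geodesic segments: \<open>between x y p\<close> holds iff p lies on some
  geodesic from x to y (see \<open>geodesic_through\<close>).\<close>

definition between :: "'a \<Rightarrow> 'a \<Rightarrow> 'a \<Rightarrow> bool" where
  "between x y p \<longleftrightarrow> d x p + d p y = d x y"

definition coarse_path :: "nat \<Rightarrow> (nat \<Rightarrow> 'a) \<Rightarrow> nat \<Rightarrow> bool" where
  "coarse_path L c n \<longleftrightarrow> (\<forall>i\<le>n. c i \<in> V) \<and> (\<forall>i<n. d (c i) (c (Suc i)) \<le> L)"

definition geodesic :: "(nat \<Rightarrow> 'a) \<Rightarrow> nat \<Rightarrow> bool" where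
  "geodesic f n \<longleftrightarrow> (\<forall>i\<le>n. f i \<in> V) \<and> (\<forall>i j. i \<le> j \<longrightarrow> j \<le> n \<longrightarrow> d (f i) (f j) = j - i)"

definition quasi_geodesic :: "nat \<Rightarrow> (nat \<Rightarrow> 'a) \<Rightarrow> nat \<Rightarrow> bool" where
  "quasi_geodesic L c n \<longleftrightarrow>
     coarse_path L c n \<and> (\<forall>i j. i \<le> j \<longrightarrow> j \<le> n \<longrightarrow> j - i \<le> L * d (c i) (c j))"

definition slim :: "nat \<Rightarrow> bool" where
  "slim \<epsilon> \<longleftrightarrow> (\<forall>x\<in>V. \<forall>y\<in>V. \<forall>z\<in>V. \<forall>p\<in>V. between x z p \<longrightarrow>
     (\<exists>q\<in>V. (between x y q \<or> between y z q) \<and> d p q \<le> \<epsilon>))"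

lemma between_commute: "x \<in> V \<Longrightarrow> y \<in> V \<Longrightarrow> p \<in> V \<Longrightarrow> between x y p \<longleftrightarrow> between y x p"
  unfolding between_def using dist_commute by (metis add.commute)

lemma between_left: "x \<in> V \<Longrightarrow> between x y x"
  unfolding between_def using dist_self by simp

lemma between_right: "y \<in> V \<Longrightarrow> between x y y"
  unfolding between_def using dist_self by simp

lemma between_trans:
  assumes "x \<in> V" "y \<in> V" "p \<in> V" "q \<in> V" "between x y p" "between x p q"
  shows "between x y q"
proof -
  have "d q y \<le> d q p + d p y" "d x y \<le> d x q + d q y"
    using dist_triangle assms(1-4) by auto
  then show ?thesis using assms(5,6) unfolding between_def by linarith
qed

lemma between_shrink:
  assumes V: "x \<in> V" "y \<in> V" "p \<in> V" "u \<in> V" "v \<in> V"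
    and "between x y p" "between x p u" "between y p v"
  shows "between u v p"
proof -
  have "d x y \<le> d x u + d u v + d v y" "d u v \<le> d u p + d p v"
    using dist_triangle[of x u y] dist_triangle[of u v y] dist_triangle[of u p v] V by auto
  moreover have "d p y = d y p" "d p v = d v p" "d v y = d y v" using dist_commute V by auto
  ultimately show ?thesis using assms(6-8) unfolding between_def by linarith
qed

lemma between_dist_sum_le:
  assumes "x \<in> V" "y \<in> V" "q \<in> V" "w \<in> V" "between x y q"
  shows "d x w + d y w \<le> d x y + 2 * d w q"
proof -
  have "d x w \<le> d x q + d q w" "d y w \<le> d y q + d q w" "d q w = d w q" "d y q = d q y"
    using dist_triangle[of x q w] dist_triangle[of y q w] dist_commute[of q w] dist_commute[of y q]
      assms(1-4) by auto
  then show ?thesis using assms(5) unfolding between_def by linarith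
qed

lemma coarse_path_dist_le:
  assumes "coarse_path L c n" "i \<le> j" "j \<le> n"
  shows "d (c i) (c j) \<le> L * (j - i)"
  using assms(2,3)
proof (induction j)
  case 0
  then show ?case using assms(1) dist_self unfolding coarse_path_def by auto
next
  case (Suc j)
  show ?case
  proof (cases "i = Suc j")
    case True
    then show ?thesis using assms(1) Suc.prems dist_self unfolding coarse_path_def by auto
  next
    case False
    then have "i \<le> j" using Suc.prems by simp
    have "d (c i) (c (Suc j)) \<le> d (c i) (c j) + d (c j) (c (Suc j))"
      using assms(1) Suc.prems dist_triangle unfolding coarse_path_def by simp
    also have "\<dots> \<le> L * (j - i) + L"
      using Suc \<open>i \<le> j\<close> assms(1) unfolding coarse_path_def by (meson Suc_leD Suc_le_lessD add_le_mono)
    also have "\<dots> = L * (Suc j - i)" using \<open>i \<le> j\<close> by (simp add: Suc_diff_le)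
    finally show ?thesis .
  qed
qed

lemma coarse_path_take: "coarse_path L c n \<Longrightarrow> m \<le> n \<Longrightarrow> coarse_path L c m"
  unfolding coarse_path_def by auto

lemma coarse_path_drop: "coarse_path L c n \<Longrightarrow> m \<le> n \<Longrightarrow> coarse_path L (\<lambda>i. c (m + i)) (n - m)"
  unfolding coarse_path_def by auto

lemma unit_path_exists:
  assumes "x \<in> V" "y \<in> V"
  shows "\<exists>f. f 0 = x \<and> f (d x y) = y \<and> coarse_path 1 f (d x y)"
  using assms
proof (induction "d x y" arbitrary: x)
  case 0
  then have "x = y" using dist_eq_0D by simp
  then show ?case using 0 dist_self unfolding coarse_path_def by (intro exI[of _ "\<lambda>_. x"]) auto
next
  case (Suc n)
  obtain z where z: "z \<in> V" "d x z = 1" "d z y = n"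
    using dist_split[of x y 1] Suc.prems Suc.hyps(2) by (metis diff_Suc_1 le_add1 plus_1_eq_Suc)
  obtain f where f: "f 0 = z" "f n = y" "coarse_path 1 f n"
    using Suc.hyps(1)[of z] z Suc.prems by auto
  define g where "g = (\<lambda>i. if i = 0 then x else f (i - 1))"
  have "g 0 = x" "g (Suc n) = y" "coarse_path 1 g (Suc n)"
    using f z Suc.prems unfolding coarse_path_def g_def by (auto simp: nat.split less_Suc_eq_0_disj)
  then show ?case using Suc.hyps(2) by metis
qed

lemma unit_path_geodesic:
  assumes "coarse_path 1 f n" "n = d (f 0) (f n)"
  shows "geodesic f n"
proof -
  have V: "\<And>i. i \<le> n \<Longrightarrow> f i \<in> V" using assms(1) unfolding coarse_path_def by simp
  have le: "\<And>i j. i \<le> j \<Longrightarrow> j \<le> n \<Longrightarrow> d (f i) (f j) \<le> j - i"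
    using coarse_path_dist_le[OF assms(1)] by fastforce
  have "d (f i) (f j) = j - i" if "i \<le> j" "j \<le> n" for i j
  proof -
    have "n \<le> d (f 0) (f i) + d (f i) (f j) + d (f j) (f n)"
      using assms(2) dist_triangle[of "f 0" "f i" "f n"] dist_triangle[of "f i" "f j" "f n"] V that
      by fastforce
    then show ?thesis using le[of 0 i] le[of i j] le[of j n] that by linarith
  qed
  then show ?thesis unfolding geodesic_def using V by blast
qed

lemma geodesic_exists:
  assumes "x \<in> V" "y \<in> V"
  obtains f where "geodesic f (d x y)" "f 0 = x" "f (d x y) = y"
  using unit_path_exists[OF assms] unit_path_geodesic by metis

lemma geodesic_between:
  assumes "geodesic f n" "i \<le> n"
  shows "between (f 0) (f n) (f i)"
  using assms unfolding geodesic_def between_def by auto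

lemma geodesic_through:
  assumes V: "x \<in> V" "z \<in> V" "p \<in> V" and "between x z p"
  obtains f where "geodesic f (d x z)" "f 0 = x" "f (d x z) = z" "f (d x p) = p"
proof -
  obtain f1 where f1: "f1 0 = x" "f1 (d x p) = p" "coarse_path 1 f1 (d x p)"
    using unit_path_exists V by blast
  obtain f2 where f2: "f2 0 = p" "f2 (d p z) = z" "coarse_path 1 f2 (d p z)"
    using unit_path_exists V by blast
  define f where "f i = (if i \<le> d x p then f1 i else f2 (i - d x p))" for i
  have n: "d x z = d x p + d p z" using assms(4) unfolding between_def by simp
  have "coarse_path 1 f (d x z)"
    unfolding coarse_path_def
  proof (intro conjI allI impI)
    fix i assume "i \<le> d x z"
    then show "f i \<in> V" using f1(3) f2(3) n unfolding coarse_path_def f_def by auto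
  next
    fix i assume i: "i < d x z"
    show "d (f i) (f (Suc i)) \<le> 1"
    proof (cases "i < d x p")
      case True
      then show ?thesis using f1(3) unfolding coarse_path_def f_def by simp
    next
      case False
      then have "f i = f2 (i - d x p)" "f (Suc i) = f2 (Suc (i - d x p))"
        using f1(2) f2(1) unfolding f_def by (auto simp: Suc_diff_le)
      then show ?thesis using f2(3) i n False unfolding coarse_path_def by auto
    qed
  qed
  moreover have "f 0 = x" "f (d x z) = z" "f (d x p) = p"
    using f1 f2 n unfolding f_def by auto
  ultimately show thesis using that unit_path_geodesic by metis
qed

lemma exists_detour_point:
  assumes V: "x \<in> V" "y \<in> V" "p0 \<in> V" and "between x y p0" "x \<in> C"
    and near: "\<And>p. p \<in> V \<Longrightarrow> between x y p \<Longrightarrow> \<exists>q\<in>C. d p q \<le> D"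
    and far: "\<And>q. q \<in> C \<Longrightarrow> D \<le> d p0 q"
  obtains u q where "u \<in> V" "between x p0 u" "D \<le> d p0 u" "d p0 u \<le> 2 * D" "q \<in> C" "d u q \<le> D"
proof (cases "2 * D \<le> d p0 x")
  case True
  obtain u where u: "u \<in> V" "d p0 u = 2 * D" "d u x = d p0 x - 2 * D"
    using dist_split[OF V(3,1) True] by blast
  have "between x p0 u"
    unfolding between_def using u True dist_commute[of x u] dist_commute[of u p0] dist_commute[of x p0] V
    by simp
  moreover from this have "between x y u" using between_trans V u(1) assms(4) by blast
  then obtain q where "q \<in> C" "d u q \<le> D" using near u(1) by blast
  ultimately show ?thesis using that u by simp
next
  case False
  then show ?thesis
    using that[of x x] V between_left dist_self far \<open>x \<in> C\<close> dist_commute[of x p0] by simp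
qed

lemma exists_detour_ends:
  fixes c :: "nat \<Rightarrow> 'a"
  assumes cV: "\<And>i. i \<le> n \<Longrightarrow> c i \<in> V" and p0: "p0 \<in> V" "between (c 0) (c n) p0"
    and far: "\<And>i. i \<le> n \<Longrightarrow> D \<le> d p0 (c i)"
    and near: "\<And>p. p \<in> V \<Longrightarrow> between (c 0) (c n) p \<Longrightarrow> \<exists>i\<le>n. d p (c i) \<le> D"
  obtains u v a b where "u \<in> V" "v \<in> V" "between u v p0" "D \<le> d p0 u" "D \<le> d p0 v"
    "a \<le> n" "b \<le> n" "d u (c a) \<le> D" "d v (c b) \<le> D" "d (c a) (c b) \<le> 6 * D"
proof -
  have near_image: "\<exists>q\<in>c ` {..n}. d p q \<le> D" if "p \<in> V" "between (c 0) (c n) p" for p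
    using near[OF that] by blast
  have near_image': "\<exists>q\<in>c ` {..n}. d p q \<le> D" if "p \<in> V" "between (c n) (c 0) p" for p
    using near_image that cV between_commute by simp
  have far_image: "D \<le> d p0 q" if "q \<in> c ` {..n}" for q
    using far that by blast
  have p0': "between (c n) (c 0) p0" using p0 cV between_commute by simp
  obtain u q where u: "u \<in> V" "between (c 0) p0 u" "D \<le> d p0 u" "d p0 u \<le> 2 * D"
    and q: "q \<in> c ` {..n}" "d u q \<le> D"
    using exists_detour_point[OF cV cV p0(1) p0(2) _ near_image far_image] by blast
  obtain v q' where v: "v \<in> V" "between (c n) p0 v" "D \<le> d p0 v" "d p0 v \<le> 2 * D"
    and q': "q' \<in> c ` {..n}" "d v q' \<le> D"
    using exists_detour_point[OF cV cV p0(1) p0' _ near_image' far_image] by blast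
  obtain a b where a: "a \<le> n" "d u (c a) \<le> D" and b: "b \<le> n" "d v (c b) \<le> D"
    using q q' by blast
  have cab: "c a \<in> V" "c b \<in> V" using cV a(1) b(1) by auto
  have "d (c a) (c b) \<le> d (c a) u + d u p0 + d p0 v + d v (c b)"
    using dist_triangle[of "c a" u "c b"] dist_triangle[of u p0 "c b"] dist_triangle[of p0 v "c b"]
      cab u(1) v(1) p0(1) by simp
  also have "\<dots> \<le> 6 * D" using a(2) b(2) u v dist_commute[of u "c a"] dist_commute[of u p0] cab p0 by simp
  finally show thesis
    using that u v a b between_shrink[of "c 0" "c n" p0 u v] cV p0 by simp
qed

lemma exists_farthest_between_point:
  fixes c :: "nat \<Rightarrow> 'a"
  assumes cV: "\<And>i. i \<le> n \<Longrightarrow> c i \<in> V"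
  obtains D p0 where "p0 \<in> V" "between (c 0) (c n) p0" "\<And>i. i \<le> n \<Longrightarrow> D \<le> d p0 (c i)"
    "\<And>p. p \<in> V \<Longrightarrow> between (c 0) (c n) p \<Longrightarrow> \<exists>i\<le>n. d p (c i) \<le> D"
proof -
  define far_from_path where
    "far_from_path D \<longleftrightarrow> (\<exists>p\<in>V. between (c 0) (c n) p \<and> (\<forall>i\<le>n. D \<le> d p (c i)))" for D
  have far_le: "D \<le> d (c 0) (c n)" if far: "far_from_path D" for D
  proof -
    obtain p where "p \<in> V" "between (c 0) (c n) p" "D \<le> d p (c 0)"
      using far unfolding far_from_path_def by blast
    then show ?thesis using dist_commute[of p "c 0"] cV unfolding between_def by simp
  qed
  have "far_from_path 0" unfolding far_from_path_def using cV between_left by blast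
  define D where "D = (GREATEST D. far_from_path D)"
  have "far_from_path D"
    unfolding D_def using GreatestI_nat[of far_from_path 0] \<open>far_from_path 0\<close> far_le by blast
  moreover have "\<exists>i\<le>n. d p (c i) \<le> D" if "p \<in> V" "between (c 0) (c n) p" for p
  proof (rule ccontr)
    assume "\<not> ?thesis"
    then have "far_from_path (Suc D)" unfolding far_from_path_def using that not_less_eq_eq by blast
    then have "Suc D \<le> D" unfolding D_def using Greatest_le_nat[of far_from_path] far_le by blast
    then show False by simp
  qed
  ultimately show thesis using that unfolding far_from_path_def by blast
qed

lemma geodesic_crossing:
  fixes c :: "nat \<Rightarrow> 'a"
  assumes v: "geodesic v m" "v 0 = c 0" "v m = c n" and c: "\<And>i. i \<le> n \<Longrightarrow> c i \<in> V" and "i0 \<le> n"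
    and near: "\<And>s. s \<le> m \<Longrightarrow> \<exists>j\<le>n. d (v s) (c j) \<le> H"
  obtains s j k where "s \<le> m" "j \<le> i0" "i0 \<le> k" "k \<le> n" "d (v s) (c j) \<le> H + 1" "d (v s) (c k) \<le> H + 1"
proof -
  define near_before where "near_before s \<longleftrightarrow> (\<exists>j\<le>i0. d (v s) (c j) \<le> H)" for s
  show thesis
  proof (cases "near_before m")
    case True
    then obtain j where "j \<le> i0" "d (v m) (c j) \<le> H" unfolding near_before_def by blast
    then show thesis using v(3) c[of n] dist_self \<open>i0 \<le> n\<close> by (intro that[of m j n]) auto
  next
    case False
    have "near_before 0" unfolding near_before_def using v(2) c[of 0] dist_self by auto
    then obtain s where s: "s < m" "near_before s" "\<not> near_before (Suc s)"
      using ex_least_nat_less[of "\<lambda>s. \<not> near_before s"] False by auto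
    obtain j where j: "j \<le> i0" "d (v s) (c j) \<le> H" using s(2) unfolding near_before_def by blast
    obtain k where k: "k \<le> n" "d (v (Suc s)) (c k) \<le> H" using near[of "Suc s"] s(1) by auto
    have "i0 \<le> k" using k s(3) unfolding near_before_def by (meson nat_le_linear)
    have "v s \<in> V" "v (Suc s) \<in> V" using v(1) s(1) unfolding geodesic_def by auto
    then have "d (v s) (c k) \<le> d (v s) (v (Suc s)) + d (v (Suc s)) (c k)"
      using dist_triangle c k(1) by blast
    also have "\<dots> \<le> H + 1" using v(1) s(1) k(2) unfolding geodesic_def by simp
    finally show thesis using that[of s j k] s(1) j \<open>i0 \<le> k\<close> k(1) by simp
  qed
qed

lemma quasi_geodesic_if_bilipschitz_geodesic:
  assumes "geodesic_nat_metric V d'" "geodesic_nat_metric.geodesic V d' f n"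
    and "\<And>x y. x \<in> V \<Longrightarrow> y \<in> V \<Longrightarrow> d x y \<le> L * d' x y"
    and "\<And>x y. x \<in> V \<Longrightarrow> y \<in> V \<Longrightarrow> d' x y \<le> L * d x y"
  shows "quasi_geodesic L f n"
proof -
  have V: "\<And>i. i \<le> n \<Longrightarrow> f i \<in> V"
    and d': "\<And>i j. i \<le> j \<Longrightarrow> j \<le> n \<Longrightarrow> d' (f i) (f j) = j - i"
    using assms(2) geodesic_nat_metric.geodesic_def[OF assms(1)] by auto
  have "d (f i) (f (Suc i)) \<le> L" if "i < n" for i
    using assms(3)[of "f i" "f (Suc i)"] V d'[of i "Suc i"] that by simp
  moreover have "j - i \<le> L * d (f i) (f j)" if "i \<le> j" "j \<le> n" for i j
    using assms(4)[of "f i" "f j"] V d' that by simp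
  ultimately show ?thesis unfolding quasi_geodesic_def coarse_path_def using V by blast
qed

lemma two_dist_le_of_near_sides:
  assumes V: "x \<in> V" "z \<in> V" "w \<in> V" "p \<in> V" "q1 \<in> V" "q2 \<in> V"
    and "between x z p" "between x w q1" "between w z q2"
  shows "2 * d w p + d x z \<le> d w x + d w z + 2 * d p q1 + 2 * d p q2"
proof -
  have "d x p \<le> d x q1 + d q1 p" "d w p \<le> d w q1 + d q1 p"
    "d w p \<le> d w q2 + d q2 p" "d p z \<le> d p q2 + d q2 z"
    using dist_triangle V by meson+
  moreover have "d q1 p = d p q1" "d q2 p = d p q2" "d q1 w = d w q1" "d w x = d x w"
    using dist_commute V by auto
  ultimately show ?thesis using assms(7-9) unfolding between_def by linarith
qed

lemma exists_between_near_gromov_product_if_slim: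
  assumes "slim \<epsilon>" and V: "w \<in> V" "x \<in> V" "z \<in> V"
  shows "\<exists>p\<in>V. between x z p \<and> 2 * d w p + d x z \<le> d w x + d w z + 4 * \<epsilon> + 2"
proof -
  obtain u where u: "geodesic u (d x z)" "u 0 = x" "u (d x z) = z"
    using geodesic_exists V by blast
  have uV: "\<And>s. s \<le> d x z \<Longrightarrow> u s \<in> V" using u(1) unfolding geodesic_def by simp
  have ub: "\<And>s. s \<le> d x z \<Longrightarrow> between x z (u s)" using geodesic_between u by metis
  define near_xw where "near_xw s \<longleftrightarrow> (\<exists>q\<in>V. between x w q \<and> d (u s) q \<le> \<epsilon>)" for s
  show ?thesis
  proof (cases "near_xw (d x z)")
    case True
    then obtain q where q: "q \<in> V" "between x w q" "d z q \<le> \<epsilon>"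
      unfolding near_xw_def u(3) by blast
    have "2 * d w z + d x z \<le> d w x + d w z + 2 * d z q + 2 * d z z"
      using two_dist_le_of_near_sides[of x z w z q z] q V between_right[of z] by simp
    then show ?thesis using q V dist_self[of z] between_right[of z] by (intro bexI[of _ z]) auto
  next
    case False
    have "near_xw 0"
      unfolding near_xw_def u(2) using V between_left dist_self by (intro bexI[of _ x]) auto
    then obtain s where s: "s < d x z" "near_xw s" "\<not> near_xw (Suc s)"
      using ex_least_nat_less[of "\<lambda>s. \<not> near_xw s"] False by auto
    obtain q1 where q1: "q1 \<in> V" "between x w q1" "d (u s) q1 \<le> \<epsilon>"
      using s(2) unfolding near_xw_def by blast
    have "u (Suc s) \<in> V" "between x z (u (Suc s))" using uV ub s(1) by auto
    then obtain q2 where q2: "q2 \<in> V" "between x w q2 \<or> between w z q2" "d (u (Suc s)) q2 \<le> \<epsilon>"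
      using assms(1) V unfolding slim_def by blast
    have q2': "between w z q2" using q2 s(3) unfolding near_xw_def by blast
    have "d (u s) q2 \<le> d (u s) (u (Suc s)) + d (u (Suc s)) q2"
      using dist_triangle uV s(1) q2(1) by simp
    moreover have "d (u s) (u (Suc s)) = 1" using u(1) s(1) unfolding geodesic_def by simp
    ultimately have "d (u s) q2 \<le> \<epsilon> + 1" using q2(3) by linarith
    then have "2 * d w (u s) + d x z \<le> d w x + d w z + 4 * \<epsilon> + 2"
      using two_dist_le_of_near_sides[of x z w "u s" q1 q2] V uV s(1) q1 q2(1) q2' ub by fastforce
    moreover have "u s \<in> V" "between x z (u s)" using uV ub s(1) by auto
    ultimately show ?thesis by blast
  qed
qed

lemma gromov_hyperbolic_if_slim:
  assumes "slim \<epsilon>"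
  shows "gromov_hyperbolic_on V (\<lambda>a b. real (d a b))"
  unfolding gromov_hyperbolic_on_def
proof (intro exI[of _ "3 * real \<epsilon> + 1"] conjI ballI)
  fix x y z w assume V: "x \<in> V" "y \<in> V" "z \<in> V" "w \<in> V"
  obtain p where p: "p \<in> V" "between x z p" "2 * d w p + d x z \<le> d w x + d w z + 4 * \<epsilon> + 2"
    using exists_between_near_gromov_product_if_slim[OF assms] V by blast
  obtain q where q: "q \<in> V" "between x y q \<or> between y z q" "d p q \<le> \<epsilon>"
    using assms V p unfolding slim_def by blast
  have "d x w + d y w \<le> d x y + 2 * d w q \<or> d y w + d z w \<le> d y z + 2 * d w q"
    using q between_dist_sum_le V by blast
  then have "min (gromov_product (\<lambda>a b. real (d a b)) x y w) (gromov_product (\<lambda>a b. real (d a b)) y z w)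
      \<le> d w q"
  proof
    assume "d x w + d y w \<le> d x y + 2 * d w q"
    then have "real (d x w + d y w) \<le> real (d x y + 2 * d w q)" by (rule of_nat_mono)
    then show ?thesis unfolding gromov_product_def min_le_iff_disj by simp
  next
    assume "d y w + d z w \<le> d y z + 2 * d w q"
    then have "real (d y w + d z w) \<le> real (d y z + 2 * d w q)" by (rule of_nat_mono)
    then show ?thesis unfolding gromov_product_def min_le_iff_disj by simp
  qed
  moreover have "2 * d w q + d x z \<le> d x w + d z w + 6 * \<epsilon> + 2"
    using p(3) q(3) dist_triangle[of w p q] dist_commute[of w x] dist_commute[of w z] V p(1) q(1)
    by simp
  then have "2 * real (d w q) \<le> real (d x w) + real (d z w) - real (d x z) + 6 * real \<epsilon> + 2"
    by (simp flip: of_nat_add of_nat_mult)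
  ultimately show "gromov_product (\<lambda>a b. real (d a b)) x z w \<ge>
      min (gromov_product (\<lambda>a b. real (d a b)) x y w) (gromov_product (\<lambda>a b. real (d a b)) y z w)
        - (3 * real \<epsilon> + 1)"
    unfolding gromov_product_def add_divide_distrib diff_divide_distrib by linarith
qed simp

end

section \<open>Hyperbolicity is invariant under bi-Lipschitz change of the metric\<close>

lemma exists_bound_pow2_le_linear: "\<exists>K::nat. \<forall>k. 2 ^ k \<le> a * k + b \<longrightarrow> k \<le> K"
proof -
  have square_le_pow2: "n ^ 2 \<le> (2::nat) ^ n" if "n \<ge> 4" for n
    using that
  proof (induction n rule: nat_induct_at_least)
    case base
    then show ?case by simp
  next
    case (Suc n)
    have "4 * n \<le> n * n" using Suc.hyps by simp
    moreover have "(Suc n) ^ 2 = n * n + 2 * n + 1" by (simp add: power2_eq_square)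
    ultimately have "(Suc n) ^ 2 \<le> 2 * n ^ 2" using Suc.hyps unfolding power2_eq_square by linarith
    also have "\<dots> \<le> 2 * 2 ^ n" using Suc.IH by simp
    finally show ?case by simp
  qed
  have "k \<le> max 4 (a + b)" if "2 ^ k \<le> a * k + b" for k
  proof (rule ccontr)
    assume "\<not> ?thesis"
    then have "k \<ge> 4" "a + b < k" by auto
    then have "a * k + b \<le> (a + b) * k" by (simp add: algebra_simps)
    also have "\<dots> < k * k" using \<open>a + b < k\<close> by simp
    also have "\<dots> \<le> 2 ^ k" using square_le_pow2[OF \<open>k \<ge> 4\<close>] by (simp add: power2_eq_square)
    finally show False using that by simp
  qed
  then show ?thesis by blast
qed

locale hyperbolic_nat_metric = geodesic_nat_metric +
  fixes \<delta> :: real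
  assumes four_point: "\<lbrakk>x \<in> V; y \<in> V; z \<in> V; w \<in> V\<rbrakk> \<Longrightarrow>
    gromov_product (\<lambda>a b. real (d a b)) x z w \<ge>
      min (gromov_product (\<lambda>a b. real (d a b)) x y w) (gromov_product (\<lambda>a b. real (d a b)) y z w) - \<delta>"
begin

lemma four_point_dist:
  "\<lbrakk>x \<in> V; y \<in> V; z \<in> V; w \<in> V\<rbrakk> \<Longrightarrow>
    real (d x w) + d z w - d x z \<ge> min (real (d x w) + d y w - d x y) (real (d y w) + d z w - d y z) - 2 * \<delta>"
  using four_point[of x y z w] unfolding gromov_product_def min_def
  by (auto split: if_splits simp: field_simps)

lemma exists_between_near_gromov_product:
  assumes V: "w \<in> V" "x \<in> V" "z \<in> V"
  shows "\<exists>q\<in>V. between x z q \<and> 2 * real (d w q) \<le> real (d x w) + d z w - d x z + 4 * \<delta> + 1"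
proof -
  have sym: "d w x = d x w" "d w z = d z w" "d z x = d x z" using dist_commute V by auto
  have tri: "d z w \<le> d x w + d x z" "d x z \<le> d x w + d z w" "d x w \<le> d x z + d z w"
    using dist_triangle V sym by (metis add.commute)+
  \<comment> \<open>walk from x towards z for (about) the Gromov product (w|z)_x\<close>
  define s where "s = (d x w + d x z - d z w) div 2"
  have s: "2 * s \<le> d x w + d x z - d z w" "d x w + d x z - d z w \<le> 2 * s + 1" "s \<le> d x z"
    using tri unfolding s_def by auto
  have s_real: "2 * real s \<le> real (d x w) + d x z - d z w" "real (d x w) + d x z - d z w \<le> 2 * real s + 1"
    using s tri by linarith+
  obtain q where q: "q \<in> V" "d x q = s" "d q z = d x z - s" using dist_split V s(3) by blast
  have qs: "d q x = s" "d z q = d x z - s" using q dist_commute V by auto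
  have "real (d w q) \<le> real (d x w) - s + 2 * \<delta>"
    using four_point_dist[of w z q x] q(1) V s_real qs s(3) sym by (simp add: of_nat_diff min_def split: if_splits)
  moreover have "real (d w q) \<le> real (d z w) + s - d x z + 1 + 2 * \<delta>"
    using four_point_dist[of w x q z] q V s_real qs s(3) sym by (simp add: of_nat_diff min_def split: if_splits)
  moreover have "between x z q" unfolding between_def using q s(3) by simp
  ultimately show ?thesis using q(1) by force
qed

definition slimness :: nat where
  "slimness = nat \<lceil>3 * \<delta> + 1\<rceil>"

lemma slim_slimness: "slim slimness"
  unfolding slim_def
proof (intro ballI impI)
  fix x y z p assume V: "x \<in> V" "y \<in> V" "z \<in> V" "p \<in> V" and "between x z p"
  then have "real (d x p) + d y p - d x y \<le> 2 * \<delta> \<or> real (d y p) + d z p - d y z \<le> 2 * \<delta>"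
    using four_point_dist[of x y z p] dist_commute[of z p] unfolding between_def
    by (auto simp: min_def split: if_splits)
  then have "\<exists>q\<in>V. (between x y q \<or> between y z q) \<and> 2 * real (d p q) \<le> 6 * \<delta> + 1"
    using exists_between_near_gromov_product[of p x y] exists_between_near_gromov_product[of p y z] V
    by force
  moreover have "n \<le> slimness" if "2 * real n \<le> 6 * \<delta> + 1" for n
    using that unfolding slimness_def by linarith
  ultimately show "\<exists>q\<in>V. (between x y q \<or> between y z q) \<and> d p q \<le> slimness" by blast
qed

text \<open>By bisection: each halving of the path costs one application of \<open>slim_slimness\<close>.\<close>

lemma coarse_path_near_between:
  assumes "coarse_path L c N" "N \<le> 2 ^ k" "p \<in> V" "between (c 0) (c N) p"
  shows "\<exists>i\<le>N. 2 * d p (c i) \<le> 2 * k * slimness + L"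
  using assms
proof (induction k arbitrary: c N p)
  case 0
  have V: "c 0 \<in> V" "c N \<in> V" using 0(1) unfolding coarse_path_def by auto
  have "d (c 0) (c N) \<le> L * N" using coarse_path_dist_le[OF 0(1), of 0 N] by simp
  also have "\<dots> \<le> L" using 0(2) by (cases N) auto
  finally have "d (c 0) (c N) \<le> L" .
  then have "d p (c 0) + d p (c N) \<le> L"
    using 0(3,4) V dist_commute[of p "c 0"] unfolding between_def by simp
  then show ?case by (cases "d p (c 0) \<le> d p (c N)") auto
next
  case (Suc k)
  define h where "h = N div 2"
  have h: "h \<le> N" "h \<le> 2 ^ k" "N - h \<le> 2 ^ k" using Suc.prems(2) unfolding h_def by auto
  have V: "c 0 \<in> V" "c h \<in> V" "c N \<in> V" using Suc.prems(1) h(1) unfolding coarse_path_def by auto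
  obtain q where q: "q \<in> V" "between (c 0) (c h) q \<or> between (c h) (c N) q" "d p q \<le> slimness"
    using slim_slimness Suc.prems(3,4) V unfolding slim_def by blast
  have "\<exists>i\<le>N. 2 * d q (c i) \<le> 2 * k * slimness + L"
    using q(2)
  proof
    assume "between (c 0) (c h) q"
    then obtain i where "i \<le> h" "2 * d q (c i) \<le> 2 * k * slimness + L"
      using Suc.IH[of c h q] coarse_path_take[OF Suc.prems(1) h(1)] h q(1) by blast
    then show ?thesis using h(1) by (intro exI[of _ i]) auto
  next
    assume "between (c h) (c N) q"
    then obtain i where "i \<le> N - h" "2 * d q (c (h + i)) \<le> 2 * k * slimness + L"
      using Suc.IH[of "\<lambda>i. c (h + i)" "N - h" q] coarse_path_drop[OF Suc.prems(1) h(1)] h q(1)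
      by auto
    then show ?thesis using h(1) by (intro exI[of _ "h + i"]) auto
  qed
  then obtain i where i: "i \<le> N" "2 * d q (c i) \<le> 2 * k * slimness + L" by blast
  moreover have "d p (c i) \<le> d p q + d q (c i)"
    using dist_triangle Suc.prems(1,3) q(1) i(1) unfolding coarse_path_def by simp
  ultimately show ?case using q(3) by (intro exI[of _ i]) auto
qed

text \<open>The detour u, c a, ..., c b, v keeps distance at least D from p0, yet has only b - a + 2
  steps; by \<open>coarse_path_near_between\<close> this is impossible unless D is logarithmic in b - a.\<close>

lemma detour_bound:
  assumes c: "coarse_path L c n" and ab: "a \<le> b" "b \<le> n"
    and uv: "u \<in> V" "v \<in> V" "d u (c a) \<le> D" "d v (c b) \<le> D"
    and p0: "p0 \<in> V" "between u v p0"
    and far: "D \<le> d p0 u" "D \<le> d p0 v" "\<And>i. a \<le> i \<Longrightarrow> i \<le> b \<Longrightarrow> D \<le> d p0 (c i)"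
  shows "D \<le> 2 * ceillog2 (b - a + 2) * slimness + L"
proof -
  define N where "N = b - a + 2"
  define P where "P t = (if t = 0 then u else if t < N then c (a + t - 1) else v)" for t
  have "coarse_path (max L D) P N"
    unfolding coarse_path_def
  proof (intro conjI allI impI)
    fix t assume "t \<le> N"
    then show "P t \<in> V" using c uv ab unfolding coarse_path_def P_def N_def by auto
  next
    fix t assume t: "t < N"
    consider "t = 0" | "0 < t" "Suc t < N" | "Suc t = N" using t by linarith
    then show "d (P t) (P (Suc t)) \<le> max L D"
    proof cases
      case 1
      then show ?thesis using uv unfolding P_def N_def by simp
    next
      case 2
      then have "a + t - 1 < n" "Suc (a + t - 1) = a + t" using ab unfolding N_def by auto
      then have "d (c (a + t - 1)) (c (a + t)) \<le> L" using c unfolding coarse_path_def by metis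
      then show ?thesis using 2 unfolding P_def N_def by simp
    next
      case 3
      then have "a + t - 1 = b" unfolding N_def using ab by simp
      then show ?thesis using uv 3 dist_commute[of v "c b"] c ab unfolding P_def N_def coarse_path_def by simp
    qed
  qed
  moreover have "P 0 = u" "P N = v" unfolding P_def N_def by auto
  ultimately obtain t where t: "t \<le> N" "2 * d p0 (P t) \<le> 2 * ceillog2 N * slimness + max L D"
    using coarse_path_near_between[of "max L D" P N "ceillog2 N" p0] p0 le_two_power_ceillog2
    by auto
  have "D \<le> d p0 (P t)" using far t(1) ab unfolding P_def N_def by auto
  then show ?thesis using t(2) unfolding N_def by (simp add: max_def split: if_splits)
qed

lemma far_point_bound:
  assumes c: "quasi_geodesic L c n" and p0: "p0 \<in> V" "between (c 0) (c n) p0"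
    and far: "\<And>i. i \<le> n \<Longrightarrow> D \<le> d p0 (c i)"
    and near: "\<And>p. p \<in> V \<Longrightarrow> between (c 0) (c n) p \<Longrightarrow> \<exists>i\<le>n. d p (c i) \<le> D"
  shows "\<exists>k. D \<le> 2 * k * slimness + L \<and> 2 ^ k \<le> 12 * L * D + 4"
proof -
  have cp: "coarse_path L c n" using c unfolding quasi_geodesic_def by simp
  then have cV: "\<And>i. i \<le> n \<Longrightarrow> c i \<in> V" unfolding coarse_path_def by simp
  obtain u v a b where uv: "u \<in> V" "v \<in> V" "between u v p0" "D \<le> d p0 u" "D \<le> d p0 v"
    and ab: "a \<le> n" "b \<le> n" "d u (c a) \<le> D" "d v (c b) \<le> D" "d (c a) (c b) \<le> 6 * D"
    using exists_detour_ends[OF cV p0 far near] by blast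
  have bound: "D \<le> 2 * ceillog2 (j - i + 2) * slimness + L \<and> j - i \<le> L * (6 * D)"
    if "i \<le> j" "j \<le> n" "d (c i) (c j) \<le> 6 * D" "u' \<in> V" "v' \<in> V" "between u' v' p0"
      "D \<le> d p0 u'" "D \<le> d p0 v'" "d u' (c i) \<le> D" "d v' (c j) \<le> D" for i j u' v'
  proof
    show "D \<le> 2 * ceillog2 (j - i + 2) * slimness + L"
      using detour_bound[OF cp that(1,2,4,5,9,10) p0(1) that(6-8)] far that(2) by simp
    have "j - i \<le> L * d (c i) (c j)" using c that(1,2) unfolding quasi_geodesic_def by simp
    then show "j - i \<le> L * (6 * D)" using that(3) by (meson le_trans mult_le_mono2)
  qed
  obtain m where "D \<le> 2 * ceillog2 (m + 2) * slimness + L" "m \<le> L * (6 * D)"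
  proof (cases "a \<le> b")
    case True
    then show thesis using that bound[of a b u v] uv ab by blast
  next
    case False
    have "b \<le> a" "d (c b) (c a) \<le> 6 * D" "between v u p0"
      using False uv ab dist_commute[of "c a" "c b"] cV between_commute[of u v p0] p0(1) by simp_all
    then show thesis using that bound[of b a v u] uv ab by blast
  qed
  moreover from this have "2 ^ ceillog2 (m + 2) \<le> 12 * L * D + 4"
    using two_power_ceillog2_gt[of "m + 2"] by simp
  ultimately show ?thesis by blast
qed

text \<open>The Morse lemma (Bridson--Haefliger III.H.1.7), in two halves: geodesics stay near
  quasi-geodesics with the same endpoints, and vice versa.\<close>

lemma between_near_quasi_geodesic:
  obtains H where
    "\<And>c n p. quasi_geodesic L c n \<Longrightarrow> p \<in> V \<Longrightarrow> between (c 0) (c n) p \<Longrightarrow> \<exists>i\<le>n. d p (c i) \<le> H"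
proof -
  obtain K where K: "\<And>k. 2 ^ k \<le> (24 * L * slimness) * k + (12 * L * L + 4) \<Longrightarrow> k \<le> K"
    using exists_bound_pow2_le_linear by blast
  have "\<exists>i\<le>n. d p (c i) \<le> 2 * K * slimness + L"
    if c: "quasi_geodesic L c n" and p: "p \<in> V" "between (c 0) (c n) p" for c n p
  proof -
    have "\<And>i. i \<le> n \<Longrightarrow> c i \<in> V" using c unfolding quasi_geodesic_def coarse_path_def by simp
    then obtain D p0 where p0: "p0 \<in> V" "between (c 0) (c n) p0" "\<And>i. i \<le> n \<Longrightarrow> D \<le> d p0 (c i)"
      and near: "\<And>p. p \<in> V \<Longrightarrow> between (c 0) (c n) p \<Longrightarrow> \<exists>i\<le>n. d p (c i) \<le> D"
      using exists_farthest_between_point by metis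
    obtain k where k: "D \<le> 2 * k * slimness + L" "2 ^ k \<le> 12 * L * D + 4"
      using far_point_bound[OF c p0 near] by blast
    have "12 * L * D + 4 \<le> 12 * L * (2 * k * slimness + L) + 4" using k(1) by simp
    then have "2 ^ k \<le> (24 * L * slimness) * k + (12 * L * L + 4)"
      using k(2) by (simp add: algebra_simps)
    then have "D \<le> 2 * K * slimness + L"
      using K k(1) by (meson add_le_mono1 le_trans mult_le_mono1 mult_le_mono2)
    then show ?thesis using near[OF p] by (meson le_trans)
  qed
  then show thesis using that by blast
qed

lemma quasi_geodesic_near_between:
  obtains H' where
    "\<And>c n i. quasi_geodesic L c n \<Longrightarrow> i \<le> n \<Longrightarrow> \<exists>p\<in>V. between (c 0) (c n) p \<and> d (c i) p \<le> H'"
proof -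
  obtain H where H:
    "\<And>c n p. quasi_geodesic L c n \<Longrightarrow> p \<in> V \<Longrightarrow> between (c 0) (c n) p \<Longrightarrow> \<exists>i\<le>n. d p (c i) \<le> H"
    using between_near_quasi_geodesic by blast
  have "\<exists>p\<in>V. between (c 0) (c n) p \<and> d (c i0) p \<le> L * (L * (2 * H + 2)) + (H + 1)"
    if c: "quasi_geodesic L c n" and i0: "i0 \<le> n" for c n i0
  proof -
    have cV: "\<And>i. i \<le> n \<Longrightarrow> c i \<in> V" using c unfolding quasi_geodesic_def coarse_path_def by simp
    obtain v where v: "geodesic v (d (c 0) (c n))" "v 0 = c 0" "v (d (c 0) (c n)) = c n"
      using geodesic_exists cV by blast
    have v_between: "between (c 0) (c n) (v s)" and vV: "v s \<in> V" if "s \<le> d (c 0) (c n)" for s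
      using geodesic_between[OF v(1) that] v that unfolding geodesic_def by auto
    obtain s j k where s: "s \<le> d (c 0) (c n)" and jk: "j \<le> i0" "i0 \<le> k" "k \<le> n"
      and near: "d (v s) (c j) \<le> H + 1" "d (v s) (c k) \<le> H + 1"
      using geodesic_crossing[OF v cV i0] H[OF c vV v_between] by blast
    have cjk: "c j \<in> V" "c k \<in> V" "c i0 \<in> V" using cV jk i0 by auto
    have "d (c j) (c k) \<le> d (c j) (v s) + d (v s) (c k)" using dist_triangle cjk vV[OF s] by blast
    also have "\<dots> \<le> 2 * H + 2" using near dist_commute[of "c j" "v s"] cjk vV[OF s] by simp
    finally have "k - j \<le> L * (2 * H + 2)"
      using c jk unfolding quasi_geodesic_def by (meson le_trans mult_le_mono2)
    have "d (c j) (c i0) \<le> L * (i0 - j)"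
      using coarse_path_dist_le[of L c n j i0] c jk i0 unfolding quasi_geodesic_def by simp
    also have "\<dots> \<le> L * (L * (2 * H + 2))"
      using \<open>k - j \<le> L * (2 * H + 2)\<close> jk by (meson diff_le_mono le_trans mult_le_mono2)
    finally have "d (c i0) (c j) \<le> L * (L * (2 * H + 2))" using dist_commute cjk by simp
    moreover have "d (c i0) (v s) \<le> d (c i0) (c j) + d (c j) (v s)"
      using dist_triangle cjk vV[OF s] by blast
    moreover have "d (c j) (v s) \<le> H + 1" using near dist_commute[of "c j" "v s"] cjk vV[OF s] by simp
    ultimately show ?thesis using v_between[OF s] vV[OF s] by fastforce
  qed
  then show thesis using that by blast
qed

context
  fixes d' :: "'a \<Rightarrow> 'a \<Rightarrow> nat" and L :: nat
  assumes geodesic': "geodesic_nat_metric V d'"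
    and lip: "\<And>x y. x \<in> V \<Longrightarrow> y \<in> V \<Longrightarrow> d x y \<le> L * d' x y"
    and lip': "\<And>x y. x \<in> V \<Longrightarrow> y \<in> V \<Longrightarrow> d' x y \<le> L * d x y"
begin

interpretation g': geodesic_nat_metric V d' by (rule geodesic')

lemma between_near_bilipschitz_between:
  obtains H where "\<And>x y s. x \<in> V \<Longrightarrow> y \<in> V \<Longrightarrow> s \<in> V \<Longrightarrow> between x y s \<Longrightarrow>
    \<exists>q\<in>V. g'.between x y q \<and> d s q \<le> H"
proof -
  obtain H where H:
    "\<And>c n p. quasi_geodesic L c n \<Longrightarrow> p \<in> V \<Longrightarrow> between (c 0) (c n) p \<Longrightarrow> \<exists>i\<le>n. d p (c i) \<le> H"
    using between_near_quasi_geodesic by blast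
  have "\<exists>q\<in>V. g'.between x y q \<and> d s q \<le> H"
    if xys: "x \<in> V" "y \<in> V" "s \<in> V" "between x y s" for x y s
  proof -
    obtain f where f: "g'.geodesic f (d' x y)" "f 0 = x" "f (d' x y) = y"
      using g'.geodesic_exists xys by blast
    have "quasi_geodesic L f (d' x y)"
      using quasi_geodesic_if_bilipschitz_geodesic[OF geodesic' f(1) lip lip'] .
    then obtain i where "i \<le> d' x y" "d s (f i) \<le> H" using H xys f by metis
    moreover have "f i \<in> V" "g'.between x y (f i)"
      using g'.geodesic_between[OF f(1)] f \<open>i \<le> d' x y\<close> unfolding g'.geodesic_def by auto
    ultimately show ?thesis by blast
  qed
  then show thesis using that by blast
qed

lemma bilipschitz_between_near_between:
  obtains H where "\<And>x y p. x \<in> V \<Longrightarrow> y \<in> V \<Longrightarrow> p \<in> V \<Longrightarrow> g'.between x y p \<Longrightarrow>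
    \<exists>r\<in>V. between x y r \<and> d p r \<le> H"
proof -
  obtain H where H:
    "\<And>c n i. quasi_geodesic L c n \<Longrightarrow> i \<le> n \<Longrightarrow> \<exists>p\<in>V. between (c 0) (c n) p \<and> d (c i) p \<le> H"
    using quasi_geodesic_near_between by blast
  have "\<exists>r\<in>V. between x y r \<and> d p r \<le> H"
    if xyp: "x \<in> V" "y \<in> V" "p \<in> V" "g'.between x y p" for x y p
  proof -
    obtain f where f: "g'.geodesic f (d' x y)" "f 0 = x" "f (d' x y) = y" "f (d' x p) = p"
      using g'.geodesic_through xyp by blast
    have "quasi_geodesic L f (d' x y)"
      using quasi_geodesic_if_bilipschitz_geodesic[OF geodesic' f(1) lip lip'] .
    moreover have "d' x p \<le> d' x y" using xyp(4) unfolding g'.between_def by simp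
    ultimately show ?thesis using H f by metis
  qed
  then show thesis using that by blast
qed

lemma slim_if_bilipschitz: "\<exists>\<epsilon>. g'.slim \<epsilon>"
proof -
  obtain H where H: "\<And>x y s. x \<in> V \<Longrightarrow> y \<in> V \<Longrightarrow> s \<in> V \<Longrightarrow> between x y s \<Longrightarrow>
      \<exists>q\<in>V. g'.between x y q \<and> d s q \<le> H"
    using between_near_bilipschitz_between by blast
  obtain H' where H': "\<And>x y p. x \<in> V \<Longrightarrow> y \<in> V \<Longrightarrow> p \<in> V \<Longrightarrow> g'.between x y p \<Longrightarrow>
      \<exists>r\<in>V. between x y r \<and> d p r \<le> H'"
    using bilipschitz_between_near_between by blast
  have "g'.slim (L * (H' + slimness + H))"
    unfolding g'.slim_def
  proof (intro ballI impI)
    fix x y z p assume V: "x \<in> V" "y \<in> V" "z \<in> V" "p \<in> V" and "g'.between x z p"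
    then obtain r where r: "r \<in> V" "between x z r" "d p r \<le> H'" using H' by blast
    obtain s where s: "s \<in> V" "between x y s \<or> between y z s" "d r s \<le> slimness"
      using slim_slimness V r unfolding slim_def by blast
    obtain q where q: "q \<in> V" "g'.between x y q \<or> g'.between y z q" "d s q \<le> H"
      using H[of x y s] H[of y z s] V s by blast
    have "d p q \<le> d p r + d r s + d s q"
      using dist_triangle[of p r q] dist_triangle[of r s q] V r s q by simp
    then have "d' p q \<le> L * (H' + slimness + H)"
      using lip'[of p q] V q r s by (meson add_le_mono le_trans mult_le_mono2)
    with q show "\<exists>q\<in>V. (g'.between x y q \<or> g'.between y z q) \<and> d' p q \<le> L * (H' + slimness + H)"
      by blast
  qed
  then show ?thesis by blast
qed

theorem gromov_hyperbolic_if_bilipschitz: "gromov_hyperbolic_on V (\<lambda>a b. real (d' a b))"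
  using slim_if_bilipschitz g'.gromov_hyperbolic_if_slim by blast

end

end

section \<open>Word metrics\<close>

context group
begin

abbreviation word_prod :: "'a list \<Rightarrow> 'a" where
  "word_prod ws \<equiv> foldr (\<lambda>x y. x \<otimes> y) ws \<one>"

lemma word_prod_closed: "set ws \<subseteq> carrier G \<Longrightarrow> word_prod ws \<in> carrier G"
  by (induction ws) auto

lemma word_prod_append:
  "set ws \<subseteq> carrier G \<Longrightarrow> set vs \<subseteq> carrier G \<Longrightarrow> word_prod (ws @ vs) = word_prod ws \<otimes> word_prod vs"
  by (induction ws) (auto simp: m_assoc word_prod_closed)

lemma word_prod_rev_inv:
  "set ws \<subseteq> carrier G \<Longrightarrow> word_prod (rev (map (\<lambda>x. inv x) ws)) = inv (word_prod ws)"
proof (induction ws)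
  case (Cons a ws)
  have "word_prod (rev (map (\<lambda>x. inv x) (a # ws))) = word_prod (rev (map (\<lambda>x. inv x) ws)) \<otimes> inv a"
    using word_prod_append[of "rev (map (\<lambda>x. inv x) ws)" "[inv a]"] Cons.prems by auto
  also have "\<dots> = inv (a \<otimes> word_prod ws)"
    using Cons word_prod_closed by (simp add: inv_mult_group)
  finally show ?case by simp
qed simp

lemma sym_alph_subset: "S \<subseteq> carrier G \<Longrightarrow> sym_alph G S \<subseteq> carrier G"
  unfolding sym_alph_def by auto

lemma inv_in_sym_alph: "S \<subseteq> carrier G \<Longrightarrow> x \<in> sym_alph G S \<Longrightarrow> inv x \<in> sym_alph G S"
  unfolding sym_alph_def by auto

lemma exists_word_if_generate:
  assumes "S \<subseteq> carrier G" "h \<in> generate G S"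
  shows "\<exists>ws. set ws \<subseteq> sym_alph G S \<and> word_prod ws = h"
  using assms(2)
proof (induction h rule: generate.induct)
  case one
  show ?case by (intro exI[of _ "[]"]) simp
next
  case (incl h)
  then show ?case using assms(1) unfolding sym_alph_def by (intro exI[of _ "[h]"]) auto
next
  case (inv h)
  then show ?case using assms(1) unfolding sym_alph_def by (intro exI[of _ "[inv h]"]) auto
next
  case (eng h1 h2)
  then obtain ws1 ws2 where "set ws1 \<subseteq> sym_alph G S" "word_prod ws1 = h1"
    "set ws2 \<subseteq> sym_alph G S" "word_prod ws2 = h2" by blast
  then show ?case using word_prod_append[of ws1 ws2] sym_alph_subset[OF assms(1)]
    by (intro exI[of _ "ws1 @ ws2"]) auto
qed

lemma word_dist_le_length:
  "set ws \<subseteq> sym_alph G S \<Longrightarrow> word_prod ws = inv g \<otimes> h \<Longrightarrow> word_dist G S g h \<le> length ws"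
  unfolding word_dist_def by (rule Least_le) blast

lemma word_dist_eq_dist_one:
  "g \<in> carrier G \<Longrightarrow> h \<in> carrier G \<Longrightarrow> word_dist G S g h = word_dist G S \<one> (inv g \<otimes> h)"
  unfolding word_dist_def by simp

lemma word_dist_one_le_1: "S \<subseteq> carrier G \<Longrightarrow> s \<in> S \<Longrightarrow> word_dist G S \<one> s \<le> 1"
  using word_dist_le_length[of "[s]" S \<one> s] unfolding sym_alph_def by auto

context
  fixes S :: "'a set"
  assumes S: "S \<subseteq> carrier G" "generate G S = carrier G"
begin

lemma shortest_word_exists:
  assumes "g \<in> carrier G" "h \<in> carrier G"
  obtains ws where "length ws = word_dist G S g h" "set ws \<subseteq> sym_alph G S" "word_prod ws = inv g \<otimes> h"
proof -
  obtain ws where "set ws \<subseteq> sym_alph G S" "word_prod ws = inv g \<otimes> h"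
    using exists_word_if_generate[OF S(1), of "inv g \<otimes> h"] S(2) assms by auto
  then have "\<exists>n ws. length ws = n \<and> set ws \<subseteq> sym_alph G S \<and> word_prod ws = inv g \<otimes> h" by blast
  then have "\<exists>ws. length ws = word_dist G S g h \<and> set ws \<subseteq> sym_alph G S \<and> word_prod ws = inv g \<otimes> h"
    unfolding word_dist_def by (rule LeastI_ex)
  then show thesis using that by blast
qed

lemma word_dist_eq_0D:
  assumes "g \<in> carrier G" "h \<in> carrier G" "word_dist G S g h = 0"
  shows "g = h"
proof -
  obtain ws where "length ws = 0" "word_prod ws = inv g \<otimes> h"
    using shortest_word_exists assms by metis
  then have "inv g \<otimes> h = \<one>" by simp
  have "h = g \<otimes> (inv g \<otimes> h)" using assms(1,2) by (simp add: m_assoc[symmetric])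
  also have "\<dots> = g" using \<open>inv g \<otimes> h = \<one>\<close> assms(1) by simp
  finally show ?thesis by simp
qed

lemma word_dist_commute:
  assumes "g \<in> carrier G" "h \<in> carrier G"
  shows "word_dist G S g h = word_dist G S h g"
proof -
  have "word_dist G S y x \<le> word_dist G S x y" if xy: "x \<in> carrier G" "y \<in> carrier G" for x y
  proof -
    obtain ws where ws: "length ws = word_dist G S x y" "set ws \<subseteq> sym_alph G S" "word_prod ws = inv x \<otimes> y"
      using shortest_word_exists xy by blast
    have "set ws \<subseteq> carrier G" using ws(2) sym_alph_subset[OF S(1)] by auto
    then have "word_prod (rev (map (\<lambda>x. inv x) ws)) = inv y \<otimes> x"
      using word_prod_rev_inv ws(3) xy by (simp add: inv_mult_group)
    moreover have "set (rev (map (\<lambda>x. inv x) ws)) \<subseteq> sym_alph G S" using ws(2) inv_in_sym_alph[OF S(1)] by auto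
    ultimately show ?thesis using word_dist_le_length ws(1) by fastforce
  qed
  then show ?thesis using assms by (simp add: le_antisym)
qed

lemma word_dist_triangle:
  assumes "x \<in> carrier G" "y \<in> carrier G" "z \<in> carrier G"
  shows "word_dist G S x z \<le> word_dist G S x y + word_dist G S y z"
proof -
  obtain ws1 where ws1: "length ws1 = word_dist G S x y" "set ws1 \<subseteq> sym_alph G S" "word_prod ws1 = inv x \<otimes> y"
    using shortest_word_exists assms by blast
  obtain ws2 where ws2: "length ws2 = word_dist G S y z" "set ws2 \<subseteq> sym_alph G S" "word_prod ws2 = inv y \<otimes> z"
    using shortest_word_exists assms by blast
  have "set ws1 \<subseteq> carrier G" "set ws2 \<subseteq> carrier G" using ws1 ws2 sym_alph_subset[OF S(1)] by auto
  then have "word_prod (ws1 @ ws2) = inv x \<otimes> y \<otimes> (inv y \<otimes> z)"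
    using word_prod_append ws1(3) ws2(3) by metis
  also have "\<dots> = inv x \<otimes> z" using assms by (simp add: m_assoc) (simp add: m_assoc[symmetric])
  finally have "word_dist G S x z \<le> length (ws1 @ ws2)" using ws1 ws2 by (intro word_dist_le_length) auto
  then show ?thesis using ws1 ws2 by simp
qed

lemma word_dist_split:
  assumes xy: "x \<in> carrier G" "y \<in> carrier G" and k: "k \<le> word_dist G S x y"
  shows "\<exists>z\<in>carrier G. word_dist G S x z = k \<and> word_dist G S z y = word_dist G S x y - k"
proof -
  obtain ws where ws: "length ws = word_dist G S x y" "set ws \<subseteq> sym_alph G S" "word_prod ws = inv x \<otimes> y"
    using shortest_word_exists xy by blast
  have alph: "set (take k ws) \<subseteq> sym_alph G S" "set (drop k ws) \<subseteq> sym_alph G S"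
    using ws(2) set_take_subset set_drop_subset by fast+
  then have carr: "set (take k ws) \<subseteq> carrier G" "set (drop k ws) \<subseteq> carrier G"
    using sym_alph_subset[OF S(1)] by auto
  define z where "z = x \<otimes> word_prod (take k ws)"
  have z: "z \<in> carrier G" unfolding z_def using xy carr word_prod_closed by simp
  have "inv x \<otimes> z = word_prod (take k ws)" unfolding z_def using xy carr word_prod_closed
    by (simp add: m_assoc[symmetric])
  then have "word_dist G S x z \<le> k" using word_dist_le_length[OF alph(1)] ws(1) k by fastforce
  moreover have "inv z \<otimes> y = word_prod (drop k ws)"
  proof -
    have "inv z \<otimes> y = inv (word_prod (take k ws)) \<otimes> (inv x \<otimes> y)"
      unfolding z_def using xy carr word_prod_closed by (simp add: inv_mult_group m_assoc)
    also have "\<dots> = inv (word_prod (take k ws)) \<otimes> (word_prod (take k ws) \<otimes> word_prod (drop k ws))"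
      using ws(3) word_prod_append[OF carr] by (metis append_take_drop_id)
    finally show ?thesis using carr word_prod_closed by (simp add: m_assoc[symmetric])
  qed
  then have "word_dist G S z y \<le> word_dist G S x y - k"
    using word_dist_le_length[OF alph(2)] ws(1) by fastforce
  ultimately show ?thesis using word_dist_triangle[OF xy(1) z xy(2)] z k by (intro bexI[of _ z]) auto
qed

lemma geodesic_nat_metric_word_dist: "geodesic_nat_metric (carrier G) (word_dist G S)"
proof
  fix x assume "x \<in> carrier G"
  then show "word_dist G S x x = 0" using word_dist_le_length[of "[]" S x x] by simp
qed (use word_dist_eq_0D word_dist_commute word_dist_triangle word_dist_split in auto)

end

lemma word_dist_le_mult:
  assumes S1: "S1 \<subseteq> carrier G" "generate G S1 = carrier G"
    and S2: "S2 \<subseteq> carrier G" "generate G S2 = carrier G"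
    and L: "\<And>s. s \<in> S1 \<Longrightarrow> word_dist G S2 \<one> s \<le> L"
    and gh: "g \<in> carrier G" "h \<in> carrier G"
  shows "word_dist G S2 g h \<le> L * word_dist G S1 g h"
proof -
  interpret S2: geodesic_nat_metric "carrier G" "word_dist G S2"
    by (rule geodesic_nat_metric_word_dist[OF S2])
  have letter: "word_dist G S2 \<one> a \<le> L" if a: "a \<in> sym_alph G S1" for a
  proof (cases "a \<in> S1")
    case False
    then obtain s where s: "s \<in> S1" "a = inv s" using a unfolding sym_alph_def by blast
    then have "word_dist G S2 \<one> a = word_dist G S2 s \<one>"
      using word_dist_eq_dist_one[of s \<one> S2] S1(1) by auto
    also have "\<dots> = word_dist G S2 \<one> s" using S2.dist_commute s(1) S1(1) by auto
    finally show ?thesis using L s(1) by simp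
  qed (use L in simp)
  have word: "word_dist G S2 \<one> (word_prod ws) \<le> L * length ws" if "set ws \<subseteq> sym_alph G S1" for ws
    using that
  proof (induction ws)
    case (Cons a ws)
    have carr: "a \<in> carrier G" "word_prod ws \<in> carrier G"
      using Cons.prems sym_alph_subset[OF S1(1)] word_prod_closed by auto
    have "word_dist G S2 a (a \<otimes> word_prod ws) = word_dist G S2 \<one> (word_prod ws)"
      using word_dist_eq_dist_one[of a "a \<otimes> word_prod ws" S2] carr by (simp add: m_assoc[symmetric])
    then have "word_dist G S2 \<one> (a \<otimes> word_prod ws) \<le> word_dist G S2 \<one> a + word_dist G S2 \<one> (word_prod ws)"
      using S2.dist_triangle[of \<one> a "a \<otimes> word_prod ws"] carr by simp
    moreover have "word_dist G S2 \<one> a \<le> L" using letter Cons.prems by simp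
    ultimately show ?case using Cons by simp
  qed (simp add: S2.dist_self)
  obtain ws where ws: "length ws = word_dist G S1 g h" "set ws \<subseteq> sym_alph G S1" "word_prod ws = inv g \<otimes> h"
    using shortest_word_exists[OF S1 gh] by blast
  show ?thesis using word[OF ws(2)] word_dist_eq_dist_one[OF gh, of S2] ws(1,3) by simp
qed

lemma gromov_hyperbolic_word_dist_transfer:
  assumes S1: "S1 \<subseteq> carrier G" "generate G S1 = carrier G"
    and S2: "S2 \<subseteq> carrier G" "generate G S2 = carrier G"
    and L12: "\<And>s. s \<in> S1 \<Longrightarrow> word_dist G S2 \<one> s \<le> L"
    and L21: "\<And>s. s \<in> S2 \<Longrightarrow> word_dist G S1 \<one> s \<le> L"
    and hyp: "gromov_hyperbolic_on (carrier G) (\<lambda>g h. real (word_dist G S1 g h))"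
  shows "gromov_hyperbolic_on (carrier G) (\<lambda>g h. real (word_dist G S2 g h))"
proof -
  obtain \<delta> where "hyperbolic_nat_metric (carrier G) (word_dist G S1) \<delta>"
    using hyp geodesic_nat_metric_word_dist[OF S1]
    unfolding gromov_hyperbolic_on_def hyperbolic_nat_metric_def hyperbolic_nat_metric_axioms_def
    by blast
  then show ?thesis
    using hyperbolic_nat_metric.gromov_hyperbolic_if_bilipschitz[OF _ geodesic_nat_metric_word_dist[OF S2]]
      word_dist_le_mult[OF S1 S2 L12] word_dist_le_mult[OF S2 S1 L21] by blast
qed

lemma word_dist_conj_le_3:
  assumes "S \<subseteq> carrier G" "g \<in> S" "a \<in> S"
  shows "word_dist G S \<one> (g \<otimes> a \<otimes> inv g) \<le> 3"
proof -
  have "g \<in> carrier G" "a \<in> carrier G" using assms by auto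
  then have "word_prod [g, a, inv g] = inv \<one> \<otimes> (g \<otimes> a \<otimes> inv g)" by (simp add: m_assoc)
  moreover have "set [g, a, inv g] \<subseteq> sym_alph G S" using assms unfolding sym_alph_def by auto
  ultimately show ?thesis using word_dist_le_length by fastforce
qed

lemma generate_replace_conjugates:
  assumes T: "T \<subseteq> carrier G" and g: "g \<in> carrier G" and A: "A \<subseteq> T"
    and gen: "generate G (T \<union> (\<lambda>a. g \<otimes> a \<otimes> inv g) ` A) = carrier G"
  shows "generate G (insert g T) = carrier G"
proof -
  have carr: "insert g T \<subseteq> carrier G" using T g by simp
  have "T \<union> (\<lambda>a. g \<otimes> a \<otimes> inv g) ` A \<subseteq> generate G (insert g T)"
    using A generate_m_inv_closed[OF carr] by (auto intro: generate.incl generate.eng)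
  then show ?thesis
    using generate_subgroup_incl[OF _ generate_is_subgroup[OF carr]] generate_incl[OF carr] gen by blast
qed

lemma gromov_hyperbolic_replace_conjugates:
  assumes T: "T \<subseteq> carrier G" and g: "g \<in> carrier G" and A: "A \<subseteq> T"
    and gen: "generate G (T \<union> (\<lambda>a. g \<otimes> a \<otimes> inv g) ` A) = carrier G"
    and hyp: "gromov_hyperbolic_on (carrier G)
      (\<lambda>x y. real (word_dist G (T \<union> (\<lambda>a. g \<otimes> a \<otimes> inv g) ` A) x y))"
  shows "gromov_hyperbolic_on (carrier G) (\<lambda>x y. real (word_dist G (insert g T) x y))"
proof -
  define S where "S = T \<union> (\<lambda>a. g \<otimes> a \<otimes> inv g) ` A"
  have carr: "S \<subseteq> carrier G" "insert g T \<subseteq> carrier G" using T g A unfolding S_def by auto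
  define L where "L = max 3 (word_dist G S \<one> g)"
  have "word_dist G (insert g T) \<one> s \<le> L" if "s \<in> S" for s
    using that word_dist_conj_le_3[OF carr(2)] word_dist_one_le_1[OF carr(2)] A
    unfolding S_def L_def by fastforce
  moreover have "word_dist G S \<one> s \<le> L" if "s \<in> insert g T" for s
    using that word_dist_one_le_1[OF carr(1)] unfolding S_def L_def by fastforce
  ultimately show ?thesis
    using gromov_hyperbolic_word_dist_transfer[OF carr(1) _ carr(2)] gen hyp
      generate_replace_conjugates[OF T g A gen] unfolding S_def by blast
qed

end

theorem lemma3p4:
  fixes G :: "('a, 'b) monoid_scheme" and A B :: "'a set" and Cs :: "'a set list"
  assumes "group G"
    and "subgroup A G" and "subgroup B G" and "\<forall>C\<in>set Cs. subgroup C G"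
    and "\<exists>g\<in>carrier G. B = (\<lambda>a. g \<otimes>\<^bsub>G\<^esub> a \<otimes>\<^bsub>G\<^esub> inv\<^bsub>G\<^esub> g) ` A"
    and "weakly_rel_hyperbolic G (A # B # Cs)"
  shows "weakly_rel_hyperbolic G (A # Cs)"
proof -
  interpret group G by fact
  obtain g where g: "g \<in> carrier G" "B = (\<lambda>a. g \<otimes>\<^bsub>G\<^esub> a \<otimes>\<^bsub>G\<^esub> inv\<^bsub>G\<^esub> g) ` A"
    using assms(5) by blast
  obtain Y where Y: "finite Y" "rel_gen_set G Y (A # B # Cs)" "rel_cayley_hyperbolic G Y (A # B # Cs)"
    using assms(6) unfolding weakly_rel_hyperbolic_def by blast
  define T where "T = Y \<union> A \<union> \<Union> (set Cs)"
  have T: "T \<subseteq> carrier G" "A \<subseteq> T"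
    using Y(2) assms(2,4) subgroup.subset unfolding rel_gen_set_def T_def by auto
  have old: "Y \<union> \<Union> (set (A # B # Cs)) = T \<union> (\<lambda>a. g \<otimes>\<^bsub>G\<^esub> a \<otimes>\<^bsub>G\<^esub> inv\<^bsub>G\<^esub> g) ` A"
    and new: "insert g Y \<union> \<Union> (set (A # Cs)) = insert g T"
    unfolding T_def g(2) by auto
  have "rel_gen_set G (insert g Y) (A # Cs)"
    using generate_replace_conjugates[OF T(1) g(1) T(2)] Y(2) T(1) g(1)
    unfolding rel_gen_set_def old new by simp
  moreover have "rel_cayley_hyperbolic G (insert g Y) (A # Cs)"
    using gromov_hyperbolic_replace_conjugates[OF T(1) g(1) T(2)] Y(2,3)
    unfolding rel_gen_set_def rel_cayley_hyperbolic_def old new by simp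
  ultimately show ?thesis using Y(1) unfolding weakly_rel_hyperbolic_def by blast
qed

end
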